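(* Let $f_1,f_2$ be strongly hyperbolic functions. Given $C\in\mathcal{C}^-(f_1,f_2)$ and two points $p\in C$, $q\notin C$ with $q$ not parallel to $p$, there exists $D\in\mathcal{C}^-(f_1,f_2)$ with $p,q\in D$ and $C\cap D=\{p\}$.
   Context: Identify $\mathbb{S}^1$ with $\mathbb{R}\cup\{\infty\}$, $\mathcal{P}=\mathbb{S}^1\times\mathbb{S}^1$, $\mathbb{R}^+=(0,\infty)$. Two points of $\mathcal{P}$ are parallel if they have the same first coordinate or the same second coordinate. A function $f:\mathbb{R}^+\to\mathbb{R}^+$ is strongly hyperbolic if: (1) $\lim_{x\to0+}f(x)=+\infty$, $\lim_{x\to+\infty}f(x)=0$; (2) $f$ strictly convex; (3) $\lim_{x\to+\infty}f(x+b)/f(x)=1$ for each $b\in\mathbb{R}$; (4) $f$ differentiable; (5) $\ln|f'|$ strictly convex. For $a>0$, $b,c\in\mathbb{R}$: $f_{a,b,c}(x)=af_1(x+b)+c$ for $x>-b$, $f_{a,b,c}(x)=-af_2(-x-b)+c$ for $x<-b$; $\overline{f_{a,b,c}}=\{(x,f_{a,b,c}(x)):x\ne-b\}\cup\{(-b,\infty),(\infty,c)\}$; $\overline{l_{s,t}}=\{(x,sx+t):x\in\mathbb{R}\}\cup\{(\infty,\infty)\}$; $\mathcal{C}^-(f_1,f_2)=\{\overline{f_{a,b,c}}:a>0,b,c\in\mathbb{R}\}\cup\{\overline{l_{s,t}}:s<0,t\in\mathbb{R}\}$. *)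

theory Defs
  imports "HOL-Analysis.Analysis"
begin

text \<open>The circle S^1 = R \<union> {\<infinity>}.\<close>
datatype circ = R real | Infty

type_synonym point = "circ \<times> circ"

definition parallel :: "point \<Rightarrow> point \<Rightarrow> bool" where
  "parallel p q \<longleftrightarrow> fst p = fst q \<or> snd p = snd q"

definition strictly_convex_on :: "real set \<Rightarrow> (real \<Rightarrow> real) \<Rightarrow> bool" where
  "strictly_convex_on S f \<longleftrightarrow> convex S \<and>
    (\<forall>x\<in>S. \<forall>y\<in>S. \<forall>u. x \<noteq> y \<longrightarrow> 0 < u \<longrightarrow> u < 1 \<longrightarrow>
       f (u * x + (1 - u) * y) < u * f x + (1 - u) * f y)"

text \<open>f : R+ \<rightarrow> R+ is represented by a function real \<Rightarrow> real whose values
  outside (0,\<infinity>) are irrelevant.\<close>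
definition strongly_hyperbolic :: "(real \<Rightarrow> real) \<Rightarrow> bool" where
  "strongly_hyperbolic f \<longleftrightarrow>
     (\<forall>x>0. f x > 0) \<and>
     filterlim f at_top (at_right 0) \<and>
     (f \<longlongrightarrow> 0) at_top \<and>
     strictly_convex_on {0<..} f \<and>
     (\<forall>b. ((\<lambda>x. f (x + b) / f x) \<longlongrightarrow> 1) at_top) \<and>
     (\<forall>x>0. f differentiable (at x)) \<and>
     strictly_convex_on {0<..} (\<lambda>x. ln \<bar>deriv f x\<bar>)"

definition fabc :: "(real \<Rightarrow> real) \<Rightarrow> (real \<Rightarrow> real) \<Rightarrow> real \<Rightarrow> real \<Rightarrow> real \<Rightarrow> real \<Rightarrow> real" where
  "fabc f1 f2 a b c x = (if x > - b then a * f1 (x + b) + c else - a * f2 (- x - b) + c)"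

definition curve_f :: "(real \<Rightarrow> real) \<Rightarrow> (real \<Rightarrow> real) \<Rightarrow> real \<Rightarrow> real \<Rightarrow> real \<Rightarrow> point set" where
  "curve_f f1 f2 a b c =
     {(R x, R (fabc f1 f2 a b c x)) | x. x \<noteq> - b} \<union> {(R (- b), Infty), (Infty, R c)}"

definition curve_l :: "real \<Rightarrow> real \<Rightarrow> point set" where
  "curve_l s t = {(R x, R (s * x + t)) | x. True} \<union> {(Infty, Infty)}"

definition Cminus :: "(real \<Rightarrow> real) \<Rightarrow> (real \<Rightarrow> real) \<Rightarrow> point set set" where
  "Cminus f1 f2 =
     {curve_f f1 f2 a b c | a b c. a > 0} \<union> {curve_l s t | s t. s < 0}"

end

theory Submission
  imports Defs
begin

(*
  Fix a finite point p = (x0, y0) and a slope s < 0.  The circles of C^- through p with slope s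
  there form a pencil: the line of slope s and, for each z > 0, one circle whose f1-branch passes
  through p with f1 evaluated at z there and one whose f2-branch does so with f2.  Every circle
  through p is a member of the pencil of its own slope at p.

  Two members of a pencil meet only in p.  The f1-branch through p lies strictly above the common
  tangent and the f2-branch strictly below it; two f1-branches are separated because the
  normalised increment (f (z + t) - f z) / f' z strictly increases with z for fixed t, which is
  where the convexity of ln |f'| enters.  Conversely, every point not parallel to p lies on a
  member of the pencil, by intermediate value arguments driven by the limits in conditions (1)
  and (3).  Negating both coordinates exchanges f1 and f2 and halves the case analysis.  At the
  points at infinity of a circle, a translate of the circle touches it.
*)

lemma strictly_convex_onD:
  assumes "strictly_convex_on S f" "x \<in> S" "y \<in> S" "x \<noteq> y" "0 < u" "u < 1"
  shows "f (u * x + (1 - u) * y) < u * f x + (1 - u) * f y"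
  using assms unfolding strictly_convex_on_def by blast

lemma strictly_convex_on_imp_convex_on:
  fixes f :: "real \<Rightarrow> real"
  assumes "strictly_convex_on S f"
  shows "convex_on S f"
proof (rule convex_onI)
  show "convex S"
    using assms unfolding strictly_convex_on_def by simp
  fix t x y :: real
  assume "0 < t" "t < 1" "x \<in> S" "y \<in> S"
  then show "f ((1 - t) *\<^sub>R x + t *\<^sub>R y) \<le> (1 - t) * f x + t * f y"
    using strictly_convex_onD[OF assms, of x y "1 - t"]
    by (cases "x = y") (auto simp: algebra_simps)
qed

lemma strictly_convex_on_tangent_less:
  fixes f :: "real \<Rightarrow> real"
  assumes f: "strictly_convex_on S f" and S: "open S" "x \<in> S" "y \<in> S" "y \<noteq> x"
    and f': "(f has_real_derivative f') (at x)"
  shows "f x + f' * (y - x) < f y"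
proof -
  define m where "m = (x + y) / 2"
  have "convex S"
    using f unfolding strictly_convex_on_def by simp
  then have "m \<in> S"
    using convexD[of S x y "1/2" "1/2"] S by (simp add: m_def add_divide_distrib)
  have "f m < (f x + f y) / 2"
    using strictly_convex_onD[OF f \<open>x \<in> S\<close> \<open>y \<in> S\<close>, of "1/2"] S
    by (simp add: m_def add_divide_distrib)
  moreover have "f' * (m - x) \<le> f m - f x"
    using f' S \<open>m \<in> S\<close>
    by (intro convex_on_imp_above_tangent[OF strictly_convex_on_imp_convex_on[OF f]
          convex_connected[OF \<open>convex S\<close>]]) (auto simp: interior_open has_field_derivative_at_within)
  moreover have "m - x = (y - x) / 2"
    by (simp add: m_def field_simps)
  ultimately show ?thesis
    by (simp add: field_simps)
qed

lemma strictly_convex_on_increment_less: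
  fixes g :: "real \<Rightarrow> real"
  assumes g: "strictly_convex_on S g" and "A \<in> S" "X + d \<in> S" "A < X" "0 < d"
  shows "g (A + d) - g A < g (X + d) - g X"
proof -
  \<comment> \<open>\<open>A + d\<close> and \<open>X\<close> are convex combinations of \<open>A\<close> and \<open>X + d\<close> with complementary weights.\<close>
  define l where "l = (X - A) / (X + d - A)"
  have "l * (X + d - A) = X - A"
    using assms by (simp add: l_def)
  then have e1: "l * A + (1 - l) * (X + d) = A + d" and e2: "(1 - l) * A + l * (X + d) = X"
    by (simp_all add: algebra_simps)
  have l: "0 < l" "l < 1"
    using assms by (auto simp: l_def field_simps)
  have "g (A + d) < l * g A + (1 - l) * g (X + d)"
    using strictly_convex_onD[OF g \<open>A \<in> S\<close> \<open>X + d \<in> S\<close> _ l] assms by (simp add: e1)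
  moreover have "g X < (1 - l) * g A + l * g (X + d)"
    using strictly_convex_onD[OF g \<open>A \<in> S\<close> \<open>X + d \<in> S\<close>, of "1 - l"] assms l by (simp add: e2)
  ultimately show ?thesis
    by (simp add: algebra_simps)
qed

lemma connected_IVT:
  fixes g :: "'a::topological_space \<Rightarrow> 'b::linorder_topology"
  assumes "connected S" "continuous_on S g" "u \<in> S" "v \<in> S" "g u \<le> y" "y \<le> g v"
  shows "\<exists>x\<in>S. g x = y"
  using connectedD_interval[OF connected_continuous_image[OF assms(2,1)], of "g u" "g v" y] assms(3-)
  by auto

lemma eventually_at_right_imp_ex:
  fixes x :: real
  assumes "eventually P (at_right x)"
  shows "\<exists>y>x. P y"
  using eventually_happens'[OF trivial_limit_at_right_real eventually_conj[OF eventually_at_right_less assms]]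
  by blast

section \<open>Strongly hyperbolic functions\<close>

definition normalized_increment :: "(real \<Rightarrow> real) \<Rightarrow> real \<Rightarrow> real \<Rightarrow> real" where
  "normalized_increment f z t = (f (z + t) - f z) / deriv f z"

locale strongly_hyperbolic_fun =
  fixes f :: "real \<Rightarrow> real"
  assumes strongly_hyperbolic: "strongly_hyperbolic f"
begin

lemma pos: "0 < x \<Longrightarrow> 0 < f x"
  using strongly_hyperbolic unfolding strongly_hyperbolic_def by auto

lemma tendsto_at_top: "(f \<longlongrightarrow> 0) at_top"
  using strongly_hyperbolic unfolding strongly_hyperbolic_def by auto

lemma ratio_tendsto: "((\<lambda>x. f (x + b) / f x) \<longlongrightarrow> 1) at_top"
  using strongly_hyperbolic unfolding strongly_hyperbolic_def by auto

lemma eventually_gt_at_right_0: "\<forall>\<^sub>F x in at_right 0. K < f x"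
  using strongly_hyperbolic unfolding strongly_hyperbolic_def filterlim_at_top_dense by auto

lemma has_deriv: "0 < x \<Longrightarrow> (f has_real_derivative deriv f x) (at x)"
  using strongly_hyperbolic unfolding strongly_hyperbolic_def
  by (simp add: DERIV_deriv_iff_real_differentiable)

lemma continuous_on: "continuous_on {0<..} f"
  using has_deriv by (intro continuous_at_imp_continuous_on) (auto intro: DERIV_isCont)

lemma tangent_less: "0 < x \<Longrightarrow> 0 < y \<Longrightarrow> y \<noteq> x \<Longrightarrow> f x + deriv f x * (y - x) < f y"
  using strongly_hyperbolic unfolding strongly_hyperbolic_def
  by (intro strictly_convex_on_tangent_less[of "{0<..}"] has_deriv) auto

lemma tangent_le: "0 < x \<Longrightarrow> 0 < y \<Longrightarrow> f x + deriv f x * (y - x) \<le> f y"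
  using tangent_less[of x y] by (cases "y = x") auto

lemma deriv_strict_mono:
  assumes "0 < x" "x < y"
  shows "deriv f x < deriv f y"
proof -
  have "(y - x) * deriv f x < (y - x) * deriv f y"
    using tangent_less[of x y] tangent_less[of y x] assms by (simp add: algebra_simps)
  then show ?thesis
    using assms by simp
qed

lemma deriv_neg:
  assumes "0 < x"
  shows "deriv f x < 0"
proof (rule ccontr)
  assume "\<not> deriv f x < 0"
  then have le: "f x \<le> f y" if "x \<le> y" for y
    using tangent_le[of x y] mult_nonneg_nonneg[of "deriv f x" "y - x"] assms that by linarith
  have "\<forall>\<^sub>F y in at_top. f y < f x"
    using order_tendstoD(2)[OF tendsto_at_top pos[OF assms]] .
  then obtain N where "\<forall>y\<ge>N. f y < f x"
    by (auto simp: eventually_at_top_linorder)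
  then show False
    using le[of "max N x"] by (meson max.cobounded1 max.cobounded2 not_le)
qed

lemma strict_antimono: "0 < x \<Longrightarrow> x < y \<Longrightarrow> f y < f x"
  using tangent_less[of y x] deriv_neg[of y] mult_neg_neg[of "deriv f y" "x - y"] by linarith

lemma ln_abs_deriv_strictly_convex: "strictly_convex_on {0<..} (\<lambda>x. ln \<bar>deriv f x\<bar>)"
  using strongly_hyperbolic unfolding strongly_hyperbolic_def by auto

lemma continuous_on_deriv: "continuous_on {0<..} (deriv f)"
proof -
  have "continuous_on {0<..} (\<lambda>x. ln \<bar>deriv f x\<bar>)"
    by (rule convex_on_continuous[OF open_greaterThan
          strictly_convex_on_imp_convex_on[OF ln_abs_deriv_strictly_convex]])
  then have "continuous_on {0<..} (\<lambda>x. - exp (ln \<bar>deriv f x\<bar>))"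
    by (intro continuous_on_minus continuous_on_exp)
  moreover have "- exp (ln \<bar>deriv f x\<bar>) = deriv f x" if "x \<in> {0<..}" for x
    using deriv_neg[of x] that by simp
  ultimately show ?thesis
    using continuous_on_cong[OF refl, of "{0<..}" "\<lambda>x. - exp (ln \<bar>deriv f x\<bar>)" "deriv f"]
    by blast
qed

lemma deriv_shift_ratio_strict_mono:
  assumes "0 < A" "A < X" "0 < d"
  shows "deriv f (A + d) / deriv f A < deriv f (X + d) / deriv f X"
proof -
  have "ln \<bar>deriv f (A + d)\<bar> - ln \<bar>deriv f A\<bar> < ln \<bar>deriv f (X + d)\<bar> - ln \<bar>deriv f X\<bar>"
    using assms by (intro strictly_convex_on_increment_less[OF ln_abs_deriv_strictly_convex]) auto
  moreover have "deriv f A < 0" "deriv f (A + d) < 0" "deriv f X < 0" "deriv f (X + d) < 0"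
    using deriv_neg assms by auto
  ultimately have "ln (\<bar>deriv f (A + d)\<bar> / \<bar>deriv f A\<bar>) < ln (\<bar>deriv f (X + d)\<bar> / \<bar>deriv f X\<bar>)"
    by (subst (1 2) ln_div) auto
  then have "\<bar>deriv f (A + d)\<bar> / \<bar>deriv f A\<bar> < \<bar>deriv f (X + d)\<bar> / \<bar>deriv f X\<bar>"
    using \<open>deriv f A < 0\<close> \<open>deriv f (A + d) < 0\<close> \<open>deriv f X < 0\<close> \<open>deriv f (X + d) < 0\<close>
    by (subst (asm) ln_less_cancel_iff) (auto simp: divide_neg_neg)
  then show ?thesis
    using \<open>deriv f A < 0\<close> \<open>deriv f (A + d) < 0\<close> \<open>deriv f X < 0\<close> \<open>deriv f (X + d) < 0\<close>
    by simp
qed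

lemma tendsto_shift_at_top: "((\<lambda>t. f (z + t)) \<longlongrightarrow> 0) at_top"
  using filterlim_compose[OF tendsto_at_top filterlim_tendsto_add_at_top[OF tendsto_const filterlim_ident]] .

lemma has_deriv_normalized_increment:
  assumes "0 < z + t"
  shows "(normalized_increment f z has_real_derivative deriv f (z + t) / deriv f z) (at t)"
proof -
  have "((\<lambda>t. f (z + t)) has_real_derivative deriv f (z + t) * 1) (at t)"
    using has_deriv[OF assms] by (intro DERIV_chain2[where g = "\<lambda>t. z + t"]) (auto intro!: derivative_eq_intros)
  then show ?thesis
    unfolding normalized_increment_def[abs_def] using DERIV_cdivide[OF DERIV_diff[OF _ DERIV_const]]
    by fastforce
qed

lemma has_deriv_normalized_increment_gap:
  "0 < z + t \<Longrightarrow> 0 < z' + t \<Longrightarrow>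
    ((\<lambda>t. normalized_increment f z' t - normalized_increment f z t) has_real_derivative
      deriv f (z' + t) / deriv f z' - deriv f (z + t) / deriv f z) (at t)"
  by (intro DERIV_diff has_deriv_normalized_increment)

lemma normalized_increment_less:
  assumes "0 < z" "0 < z + t" "t \<noteq> 0"
  shows "normalized_increment f z t < t"
  using tangent_less[of z "z + t"] deriv_neg[of z] assms
  by (simp add: normalized_increment_def divide_less_eq algebra_simps)

lemma normalized_increment_pos: "0 < z \<Longrightarrow> 0 < t \<Longrightarrow> 0 < normalized_increment f z t"
  using strict_antimono[of z "z + t"] deriv_neg[of z]
  by (simp add: normalized_increment_def divide_neg_neg)

lemma normalized_increment_neg: "0 < z + t \<Longrightarrow> t < 0 \<Longrightarrow> normalized_increment f z t < 0"
  using strict_antimono[of "z + t" z] deriv_neg[of z]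
  by (simp add: normalized_increment_def divide_pos_neg)

lemma normalized_increment_gap_strict_mono:
  assumes "0 < z" "z < z'" "0 \<le> t1" "t1 < t2"
  shows "normalized_increment f z' t1 - normalized_increment f z t1
    < normalized_increment f z' t2 - normalized_increment f z t2"
proof (rule DERIV_pos_imp_increasing_open[OF \<open>t1 < t2\<close>])
  fix t assume "t1 < t" "t < t2"
  then have "deriv f (z + t) / deriv f z < deriv f (z' + t) / deriv f z'"
    using deriv_shift_ratio_strict_mono[of z z' t] assms by simp
  then show "\<exists>y. ((\<lambda>t. normalized_increment f z' t - normalized_increment f z t)
      has_real_derivative y) (at t) \<and> 0 < y"
    using \<open>t1 < t\<close> assms
    by (intro exI[of _ "deriv f (z' + t) / deriv f z' - deriv f (z + t) / deriv f z"] conjI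
        has_deriv_normalized_increment_gap) auto
next
  show "continuous_on {t1..t2} (\<lambda>t. normalized_increment f z' t - normalized_increment f z t)"
    by (rule DERIV_atLeastAtMost_imp_continuous_on, rule exI, rule has_deriv_normalized_increment_gap)
      (use assms in auto)
qed

lemma normalized_increment_gap_strict_antimono:
  assumes "0 < z" "z < z'" "- z < t1" "t1 < t2" "t2 \<le> 0"
  shows "normalized_increment f z' t2 - normalized_increment f z t2
    < normalized_increment f z' t1 - normalized_increment f z t1"
proof (rule DERIV_neg_imp_decreasing_open[OF \<open>t1 < t2\<close>])
  fix t assume "t1 < t" "t < t2"
  then have "deriv f z / deriv f (z + t) < deriv f z' / deriv f (z' + t)"
    using deriv_shift_ratio_strict_mono[of "z + t" "z' + t" "- t"] assms by simp
  moreover have "0 < deriv f z / deriv f (z + t)"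
    using deriv_neg[of z] deriv_neg[of "z + t"] \<open>t1 < t\<close> assms by (simp add: divide_neg_neg)
  ultimately have "deriv f (z' + t) / deriv f z' < deriv f (z + t) / deriv f z"
    using less_imp_inverse_less by fastforce
  then show "\<exists>y. ((\<lambda>t. normalized_increment f z' t - normalized_increment f z t)
      has_real_derivative y) (at t) \<and> y < 0"
    using \<open>t1 < t\<close> assms
    by (intro exI[of _ "deriv f (z' + t) / deriv f z' - deriv f (z + t) / deriv f z"] conjI
        has_deriv_normalized_increment_gap) auto
next
  show "continuous_on {t1..t2} (\<lambda>t. normalized_increment f z' t - normalized_increment f z t)"
    by (rule DERIV_atLeastAtMost_imp_continuous_on, rule exI, rule has_deriv_normalized_increment_gap)
      (use assms in auto)
qed

lemma normalized_increment_strict_mono_base: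
  assumes "0 < z" "z < z'" "- z < t" "t \<noteq> 0"
  shows "normalized_increment f z t < normalized_increment f z' t"
proof (cases "0 < t")
  case True
  then show ?thesis
    using normalized_increment_gap_strict_mono[of z z' 0 t] assms
    by (simp add: normalized_increment_def)
next
  case False
  then show ?thesis
    using normalized_increment_gap_strict_antimono[of z z' t 0] assms
    by (simp add: normalized_increment_def)
qed

lemma value_deriv_ratio_strict_antimono:
  assumes "0 < z" "z < z'"
  shows "f z' / deriv f z' < f z / deriv f z"
proof -
  let ?gap = "\<lambda>t. normalized_increment f z' t - normalized_increment f z t"
  have "deriv f z < 0" "deriv f z' < 0"
    using deriv_neg assms by auto
  then have "(?gap \<longlongrightarrow> (0 - f z') / deriv f z' - (0 - f z) / deriv f z) at_top"
    unfolding normalized_increment_def by (intro tendsto_intros tendsto_shift_at_top) auto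
  moreover have "\<forall>\<^sub>F t in at_top. ?gap 1 \<le> ?gap t"
    using eventually_ge_at_top[of 1]
  proof eventually_elim
    case (elim t)
    then show ?case
      using normalized_increment_gap_strict_mono[of z z' 1 t] assms by (cases "t = 1") auto
  qed
  ultimately have "?gap 1 \<le> (0 - f z') / deriv f z' - (0 - f z) / deriv f z"
    by (intro tendsto_lowerbound) auto
  moreover have "0 < ?gap 1"
    using normalized_increment_gap_strict_mono[of z z' 0 1] assms by (simp add: normalized_increment_def)
  ultimately show ?thesis
    by simp
qed

lemma neg_div_deriv_pos: "s < 0 \<Longrightarrow> 0 < x \<Longrightarrow> 0 < s / deriv f x"
  using deriv_neg[of x] by (simp add: divide_neg_neg)

lemma neg_div_deriv_strict_mono:
  assumes "s < 0" "0 < x" "x < y"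
  shows "s / deriv f x < s / deriv f y"
proof -
  have "deriv f x < deriv f y" "deriv f x < 0" "deriv f y < 0"
    using deriv_strict_mono deriv_neg assms by auto
  then show ?thesis
    using assms(1) by (intro divide_strict_left_mono_neg) (auto intro: mult_neg_neg)
qed

lemma neg_div_deriv_mult_strict_mono:
  assumes "s < 0" "0 < x" "x < y"
  shows "s / deriv f x * f x < s / deriv f y * f y"
proof -
  have "s * (f x / deriv f x) < s * (f y / deriv f y)"
    using value_deriv_ratio_strict_antimono[OF assms(2,3)] assms(1) by (rule mult_strict_left_mono_neg)
  then show ?thesis
    by simp
qed

lemma eventually_neg_deriv_gt_at_right_0: "\<forall>\<^sub>F x in at_right 0. K < - deriv f x"
proof -
  have "\<forall>\<^sub>F x in at_right 0. \<bar>K\<bar> + f 1 < f x"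
    by (rule eventually_gt_at_right_0)
  moreover have "\<forall>\<^sub>F x in at_right (0::real). x < 1"
    using order_tendstoD(2)[OF tendsto_ident_at zero_less_one] .
  moreover have "\<forall>\<^sub>F x in at_right (0::real). 0 < x"
    by (rule eventually_at_right_less)
  ultimately show ?thesis
  proof eventually_elim
    case (elim x)
    then have "f x - f 1 \<le> - deriv f x * (1 - x)"
      using tangent_le[of x 1] by (simp add: algebra_simps)
    moreover have "- deriv f x * (1 - x) \<le> - deriv f x"
      using deriv_neg[of x] elim by (intro mult_left_le) auto
    ultimately show ?case
      using elim by linarith
  qed
qed

lemma eventually_less_neg_deriv_at_right_0:
  assumes "0 < e"
  shows "\<forall>\<^sub>F x in at_right 0. f x < e * - deriv f x"
proof -
  define v where "v = e / 2"
  have "\<forall>\<^sub>F x in at_right 0. f v / v < - deriv f x"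
    by (rule eventually_neg_deriv_gt_at_right_0)
  moreover have "\<forall>\<^sub>F x in at_right (0::real). x < v"
    using order_tendstoD(2)[OF tendsto_ident_at, of 0 v] assms by (simp add: v_def)
  moreover have "\<forall>\<^sub>F x in at_right (0::real). 0 < x"
    by (rule eventually_at_right_less)
  ultimately show ?thesis
  proof eventually_elim
    case (elim x)
    then have "f x \<le> f v + - deriv f x * (v - x)"
      using tangent_le[of x v] by (simp add: algebra_simps)
    also have "\<dots> < f v + - deriv f x * v"
      using deriv_neg[of x] elim by simp
    also have "f v < v * - deriv f x"
      using elim assms by (simp add: v_def field_simps)
    then have "f v + - deriv f x * v < e * - deriv f x"
      by (simp add: v_def algebra_simps)
    finally show ?case .
  qed
qed

lemma ex_neg_deriv_less:
  assumes "0 < K"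
  shows "\<exists>x>0. K * - deriv f x < f x"
proof -
  have "\<forall>\<^sub>F x in at_top. f (x + - 1) / f x < 1 + 1 / K"
    using order_tendstoD(2)[OF ratio_tendsto[of "- 1"], of "1 + 1 / K"] assms by simp
  then obtain N where N: "\<And>x. N \<le> x \<Longrightarrow> f (x - 1) / f x < 1 + 1 / K"
    by (auto simp: eventually_at_top_linorder)
  define x where "x = max N 2"
  have x: "N \<le> x" "1 < x"
    by (auto simp: x_def)
  then have "f (x - 1) < (1 + 1 / K) * f x"
    using N[of x] pos[of x] by (simp add: divide_less_eq)
  moreover have "K * (f x - deriv f x) \<le> K * f (x - 1)"
    using tangent_le[of x "x - 1"] x assms by (intro mult_left_mono) auto
  ultimately have "K * - deriv f x < f x"
    using assms by (simp add: field_simps)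
  then show ?thesis
    using x by (intro exI[of _ x]) simp
qed

lemma ex_neg_deriv_shift_gt:
  assumes "0 < d" "L < 1"
  shows "\<exists>x>0. L * - deriv f x < - deriv f (x + d)"
proof (rule ccontr)
  \<comment> \<open>Otherwise \<open>f (x + d) - L * f x\<close> is nondecreasing with limit \<open>0\<close>, hence nonpositive,
    contradicting \<open>f (x + d) / f x \<longlongrightarrow> 1 > L\<close>.\<close>
  assume "\<not> ?thesis"
  then have "- deriv f (x + d) \<le> L * - deriv f x" if "0 < x" for x
    using that not_less by blast
  then have deriv_le: "0 \<le> deriv f (x + d) - L * deriv f x" if "0 < x" for x
    using that by fastforce
  define u where "u x = f (x + d) - L * f x" for x
  have u_mono: "u x \<le> u y" if "0 < x" "x \<le> y" for x y
  proof (rule DERIV_nonneg_imp_nondecreasing[OF \<open>x \<le> y\<close>])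
    fix t assume "x \<le> t" "t \<le> y"
    then have "0 < t" "0 < t + d"
      using that assms by auto
    have "(u has_real_derivative deriv f (t + d) - L * deriv f t) (at t)"
      unfolding u_def[abs_def]
      by (rule DERIV_diff[OF DERIV_shift[THEN iffD1, OF has_deriv[OF \<open>0 < t + d\<close>]]
          DERIV_cmult[OF has_deriv[OF \<open>0 < t\<close>]]])
    then show "\<exists>y. (u has_real_derivative y) (at t) \<and> 0 \<le> y"
      using deriv_le[OF \<open>0 < t\<close>] by blast
  qed
  have "(u \<longlongrightarrow> 0 - L * 0) at_top"
    unfolding u_def using tendsto_shift_at_top[of d]
    by (intro tendsto_intros tendsto_at_top) (simp add: add.commute)
  moreover have "\<forall>\<^sub>F y in at_top. u x \<le> u y" if "0 < x" for x
    using eventually_ge_at_top[of x] by eventually_elim (use that u_mono in blast)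
  ultimately have u_nonpos: "u x \<le> 0" if "0 < x" for x
    using that tendsto_lowerbound[of u 0 at_top "u x"] by simp
  have "\<forall>\<^sub>F x in at_top. L < f (x + d) / f x"
    using order_tendstoD(1)[OF ratio_tendsto[of d], of L] assms by simp
  then obtain N where N: "\<And>x. N \<le> x \<Longrightarrow> L < f (x + d) / f x"
    by (auto simp: eventually_at_top_linorder)
  define x where "x = max N 1"
  have "0 < x"
    by (simp add: x_def)
  then have "L * f x < f (x + d)"
    using N[of x] pos[of x] by (simp add: x_def less_divide_eq)
  then show False
    using u_nonpos[OF \<open>0 < x\<close>] by (simp add: u_def)
qed

lemma surj_pos:
  assumes "0 < y"
  shows "\<exists>x>0. f x = y"
proof -
  obtain u where "0 < u" "y < f u"
    using eventually_at_right_imp_ex[OF eventually_gt_at_right_0] by blast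
  moreover have "\<forall>\<^sub>F x in at_top. f x < y"
    using order_tendstoD(2)[OF tendsto_at_top assms] .
  then obtain N where "\<And>x. N \<le> x \<Longrightarrow> f x < y"
    by (auto simp: eventually_at_top_linorder)
  then have "f (max N 1) < y"
    by simp
  ultimately obtain x where "x \<in> {0<..}" "f x = y"
    using connected_IVT[OF _ continuous_on, of "max N 1" u y] by force
  then show ?thesis
    by auto
qed

lemma IVT_neg_deriv:
  assumes "connected S" "S \<subseteq> {0<..}" "continuous_on S N" "u \<in> S" "v \<in> S"
    and "N u \<le> k * - deriv f u" "k * - deriv f v \<le> N v"
  shows "\<exists>x\<in>S. N x = k * - deriv f x"
proof -
  have "continuous_on S (\<lambda>x. N x - k * - deriv f x)"
    using continuous_on_subset[OF continuous_on_deriv assms(2)] assms(3)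
    by (intro continuous_intros)
  then obtain x where "x \<in> S" "N x - k * - deriv f x = 0"
    using connected_IVT[OF assms(1), of "\<lambda>x. N x - k * - deriv f x" u v 0] assms by auto
  then show ?thesis
    by (intro bexI[of _ x]) auto
qed

lemma ex_eq_neg_deriv:
  assumes "0 < k"
  shows "\<exists>x>0. f x = k * - deriv f x"
proof -
  obtain u where "0 < u" "f u < k * - deriv f u"
    using eventually_at_right_imp_ex[OF eventually_less_neg_deriv_at_right_0[OF assms]] by blast
  moreover obtain v where "0 < v" "k * - deriv f v < f v"
    using ex_neg_deriv_less[OF assms] by blast
  ultimately show ?thesis
    using IVT_neg_deriv[of "{0<..}" f u v k] continuous_on by auto
qed

lemma ex_drop_eq_neg_deriv_left:
  assumes "0 < k" "k < d"
  shows "\<exists>x>0. f x - f (x + d) = k * - deriv f x"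
proof -
  obtain u where "0 < u" "f u < k * - deriv f u"
    using eventually_at_right_imp_ex[OF eventually_less_neg_deriv_at_right_0[OF assms(1)]] by blast
  moreover have "0 < f (u + d)"
    using pos \<open>0 < u\<close> assms by simp
  moreover obtain v where "0 < v" "k / d * - deriv f v < - deriv f (v + d)"
    using ex_neg_deriv_shift_gt[of d "k / d"] assms by auto
  moreover have "d * - deriv f (v + d) \<le> f v - f (v + d)"
    using tangent_le[of "v + d" v] \<open>0 < v\<close> assms by (simp add: algebra_simps)
  moreover have "continuous_on {0<..} (\<lambda>x. f x - f (x + d))"
    using assms by (intro continuous_intros continuous_on continuous_on_compose2[OF continuous_on]) auto
  ultimately show ?thesis
    using IVT_neg_deriv[of "{0<..}" "\<lambda>x. f x - f (x + d)" u v k] assms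
    by (auto simp: field_simps)
qed

lemma ex_drop_eq_neg_deriv_right:
  assumes "0 < d" "d < k"
  shows "\<exists>x>d. f (x - d) - f x = k * - deriv f x"
proof -
  obtain z where z: "0 < z" "d / k * - deriv f z < - deriv f (z + d)"
    using ex_neg_deriv_shift_gt[of d "d / k"] assms by auto
  have "f z - f (z + d) \<le> d * - deriv f z"
    using tangent_le[of z "z + d"] z assms by (simp add: algebra_simps)
  also have "\<dots> < k * - deriv f (z + d)"
    using z assms by (simp add: field_simps)
  finally have v: "f (z + d - d) - f (z + d) \<le> k * - deriv f (z + d)"
    by simp
  obtain w where w: "0 < w" "w < d" "f d + k * - deriv f d < f w"
    using eventually_at_right_imp_ex[OF eventually_conj[OF eventually_gt_at_right_0
          order_tendstoD(2)[OF tendsto_ident_at \<open>0 < d\<close>]]] by blast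
  have "k * - deriv f (d + w) < k * - deriv f d"
    using deriv_strict_mono[of d "d + w"] w assms by simp
  moreover have "f (d + w) < f d"
    using strict_antimono[of d "d + w"] w assms by simp
  ultimately have u: "k * - deriv f (d + w) \<le> f (d + w - d) - f (d + w)"
    using w by simp
  have "continuous_on {d<..} (\<lambda>x. f (x - d) - f x)"
    using assms by (intro continuous_intros continuous_on_compose2[OF continuous_on]
        continuous_on_subset[OF continuous_on]) auto
  then show ?thesis
    using IVT_neg_deriv[of "{d<..}" "\<lambda>x. f (x - d) - f x" "z + d" "d + w" k] u v z w assms
    by auto
qed

end

section \<open>The circles of \<open>C\<^sup>-\<close>\<close>

lemma point_cases [case_names R_R R_Infty Infty_R Infty_Infty]:
  fixes p :: point
  obtains x y where "p = (R x, R y)" | x where "p = (R x, Infty)" | y where "p = (Infty, R y)"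
    | "p = (Infty, Infty)"
  by (metis circ.exhaust prod.exhaust)

lemma mem_curve_f [simp]:
  "(R x, R y) \<in> curve_f f1 f2 a b c \<longleftrightarrow> x \<noteq> - b \<and> y = fabc f1 f2 a b c x"
  "(R x, Infty) \<in> curve_f f1 f2 a b c \<longleftrightarrow> x = - b"
  "(Infty, R y) \<in> curve_f f1 f2 a b c \<longleftrightarrow> y = c"
  "(Infty, Infty) \<notin> curve_f f1 f2 a b c"
  unfolding curve_f_def by auto

lemma mem_curve_l [simp]:
  "(R x, R y) \<in> curve_l s t \<longleftrightarrow> y = s * x + t"
  "(R x, Infty) \<notin> curve_l s t"
  "(Infty, R y) \<notin> curve_l s t"
  "(Infty, Infty) \<in> curve_l s t"
  unfolding curve_l_def by auto

lemma fabc_right_branch: "- b < x \<Longrightarrow> fabc f1 f2 a b c x = a * f1 (x + b) + c"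
  unfolding fabc_def by simp

lemma fabc_left_branch: "x < - b \<Longrightarrow> fabc f1 f2 a b c x = - a * f2 (- x - b) + c"
  unfolding fabc_def by simp

lemma fabc_shift_const: "fabc f1 f2 a b c' x = fabc f1 f2 a b c x + (c' - c)"
  unfolding fabc_def by simp

lemma fabc_shift_arg: "fabc f1 f2 a b' c x = fabc f1 f2 a b c (x + b' - b)"
  unfolding fabc_def by (simp add: algebra_simps minus_diff_commute)

lemma curve_f_in_Cminus: "0 < a \<Longrightarrow> curve_f f1 f2 a b c \<in> Cminus f1 f2"
  unfolding Cminus_def by blast

lemma curve_l_in_Cminus: "s < 0 \<Longrightarrow> curve_l s t \<in> Cminus f1 f2"
  unfolding Cminus_def by blast

lemma point_sets_Int_eq_singletonI:
  assumes "p \<in> C" "p \<in> D"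
    and "\<And>x y. (R x, R y) \<in> C \<Longrightarrow> (R x, R y) \<in> D \<Longrightarrow> (R x, R y) = p"
    and "\<And>x. (R x, Infty) \<in> C \<Longrightarrow> (R x, Infty) \<in> D \<Longrightarrow> (R x, Infty) = p"
    and "\<And>y. (Infty, R y) \<in> C \<Longrightarrow> (Infty, R y) \<in> D \<Longrightarrow> (Infty, R y) = p"
    and "(Infty, Infty) \<in> C \<Longrightarrow> (Infty, Infty) \<in> D \<Longrightarrow> (Infty, Infty) = p"
  shows "C \<inter> D = {p}"
proof (intro equalityI subsetI)
  fix q assume "q \<in> C \<inter> D"
  then show "q \<in> {p}"
    using assms(3-) by (cases q rule: point_cases) auto
qed (use assms in auto)

lemma curve_l_Int_curve_l: "t \<noteq> t' \<Longrightarrow> curve_l s t \<inter> curve_l s t' = {(Infty, Infty)}"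
  by (rule point_sets_Int_eq_singletonI) auto

lemma curve_f_Int_curve_f_const:
  "c \<noteq> c' \<Longrightarrow> curve_f f1 f2 a b c \<inter> curve_f f1 f2 a b c' = {(R (- b), Infty)}"
  by (rule point_sets_Int_eq_singletonI) (auto simp: fabc_shift_const[of f1 f2 a b c' _ c])

lemma ex_parallel_curve_l:
  assumes "q \<notin> curve_l s t" "\<not> parallel q (Infty, Infty)"
  shows "\<exists>t'. t' \<noteq> t \<and> q \<in> curve_l s t'"
proof -
  obtain x y where "q = (R x, R y)"
    using assms(2) unfolding parallel_def by (cases q rule: point_cases) auto
  then show ?thesis
    using assms(1) by (intro exI[of _ "y - s * x"]) auto
qed

lemma ex_const_shift_curve_f:
  assumes "q \<notin> curve_f f1 f2 a b c" "\<not> parallel q (R (- b), Infty)"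
  shows "\<exists>c'. c' \<noteq> c \<and> q \<in> curve_f f1 f2 a b c'"
  using assms(2)
proof (cases q rule: point_cases)
  case (R_R x y)
  then show ?thesis
    using assms fabc_shift_const[of f1 f2 a b "c + y - fabc f1 f2 a b c x" x c]
    by (intro exI[of _ "c + y - fabc f1 f2 a b c x"]) (auto simp: parallel_def)
next
  case (Infty_R y)
  then show ?thesis
    using assms(1) by (intro exI[of _ y]) auto
qed (auto simp: parallel_def)

lemma exists_touching_circle_parallel_line:
  assumes "s < 0" "q \<notin> curve_l s t" "\<not> parallel q (Infty, Infty)"
  shows "\<exists>D\<in>Cminus f1 f2. (Infty, Infty) \<in> D \<and> q \<in> D \<and> curve_l s t \<inter> D = {(Infty, Infty)}"
proof -
  obtain t' where "t' \<noteq> t" "q \<in> curve_l s t'"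
    using ex_parallel_curve_l[OF assms(2,3)] by blast
  then show ?thesis
    using curve_l_Int_curve_l[of t t' s] curve_l_in_Cminus[OF assms(1)]
    by (intro bexI[of _ "curve_l s t'"]) auto
qed

lemma exists_touching_circle_const_shift:
  assumes "0 < a" "q \<notin> curve_f f1 f2 a b c" "\<not> parallel q (R (- b), Infty)"
  shows "\<exists>D\<in>Cminus f1 f2. (R (- b), Infty) \<in> D \<and> q \<in> D \<and>
    curve_f f1 f2 a b c \<inter> D = {(R (- b), Infty)}"
proof -
  obtain c' where "c' \<noteq> c" "q \<in> curve_f f1 f2 a b c'"
    using ex_const_shift_curve_f[OF assms(2,3)] by blast
  then show ?thesis
    using curve_f_Int_curve_f_const[of c c' f1 f2 a b] curve_f_in_Cminus[OF assms(1)]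
    by (intro bexI[of _ "curve_f f1 f2 a b c'"]) auto
qed

fun neg_circ :: "circ \<Rightarrow> circ" where
  "neg_circ (R x) = R (- x)"
| "neg_circ Infty = Infty"

definition reflect :: "point \<Rightarrow> point" where
  "reflect = map_prod neg_circ neg_circ"

lemma neg_circ_neg_circ [simp]: "neg_circ (neg_circ u) = u"
  by (cases u) auto

lemma reflect_Pair [simp]: "reflect (u, v) = (neg_circ u, neg_circ v)"
  by (simp add: reflect_def)

lemma reflect_reflect [simp]: "reflect (reflect p) = p"
  by (cases p) simp

lemma inj_reflect: "inj reflect"
  by (metis injI reflect_reflect)

lemma mem_reflect_image: "p \<in> reflect ` A \<longleftrightarrow> reflect p \<in> A"
  by (metis image_iff reflect_reflect)

lemma reflect_image_Int_eq_singleton_iff: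
  "reflect ` A \<inter> reflect ` B = {reflect p} \<longleftrightarrow> A \<inter> B = {p}"
  by (metis image_Int[OF inj_reflect] image_empty image_insert inj_image_eq_iff[OF inj_reflect])

lemma fabc_reflect: "x \<noteq> b \<Longrightarrow> fabc f2 f1 a (- b) (- c) x = - fabc f1 f2 a b c (- x)"
  unfolding fabc_def by auto

lemma reflect_curve_f: "reflect ` curve_f f1 f2 a b c = curve_f f2 f1 a (- b) (- c)"
proof (intro set_eqI)
  fix p :: point
  show "p \<in> reflect ` curve_f f1 f2 a b c \<longleftrightarrow> p \<in> curve_f f2 f1 a (- b) (- c)"
    unfolding mem_reflect_image
    using fabc_reflect[of _ b f2 f1 a c]
    by (cases p rule: point_cases) (auto simp: minus_equation_iff)
qed

lemma reflect_curve_l: "reflect ` curve_l s t = curve_l s (- t)"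
proof (intro set_eqI)
  fix p :: point
  show "p \<in> reflect ` curve_l s t \<longleftrightarrow> p \<in> curve_l s (- t)"
    unfolding mem_reflect_image
    by (cases p rule: point_cases) auto
qed

section \<open>Tangent pencils\<close>

text \<open>The circles through \<open>(x0, y0)\<close> with slope \<open>s\<close> there: \<open>right_tangent f1 f2 x0 y0 s z\<close> passes
  through \<open>(x0, y0)\<close> on its \<open>f1\<close>-branch, where \<open>f1\<close> is evaluated at \<open>z\<close>, and
  \<open>left_tangent f1 f2 x0 y0 s w\<close> on its \<open>f2\<close>-branch, where \<open>f2\<close> is evaluated at \<open>w\<close>.\<close>

definition right_tangent ::
    "(real \<Rightarrow> real) \<Rightarrow> (real \<Rightarrow> real) \<Rightarrow> real \<Rightarrow> real \<Rightarrow> real \<Rightarrow> real \<Rightarrow> point set" where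
  "right_tangent f1 f2 x0 y0 s z =
     curve_f f1 f2 (s / deriv f1 z) (z - x0) (y0 - s / deriv f1 z * f1 z)"

definition left_tangent ::
    "(real \<Rightarrow> real) \<Rightarrow> (real \<Rightarrow> real) \<Rightarrow> real \<Rightarrow> real \<Rightarrow> real \<Rightarrow> real \<Rightarrow> point set" where
  "left_tangent f1 f2 x0 y0 s w =
     curve_f f1 f2 (s / deriv f2 w) (- x0 - w) (y0 + s / deriv f2 w * f2 w)"

definition tangent_pencil ::
    "(real \<Rightarrow> real) \<Rightarrow> (real \<Rightarrow> real) \<Rightarrow> real \<Rightarrow> real \<Rightarrow> real \<Rightarrow> point set set" where
  "tangent_pencil f1 f2 x0 y0 s =
     insert (curve_l s (y0 - s * x0))
       ({right_tangent f1 f2 x0 y0 s z | z. 0 < z} \<union> {left_tangent f1 f2 x0 y0 s w | w. 0 < w})"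

lemma right_tangent_f1_branch:
  "x0 - z < x \<Longrightarrow>
    (R x, R y) \<in> right_tangent f1 f2 x0 y0 s z \<longleftrightarrow> y = y0 + s * normalized_increment f1 z (x - x0)"
  by (auto simp: right_tangent_def fabc_right_branch normalized_increment_def algebra_simps
      diff_divide_distrib)

lemma right_tangent_f2_branch:
  "x < x0 - z \<Longrightarrow>
    (R x, R y) \<in> right_tangent f1 f2 x0 y0 s z \<longleftrightarrow> y = y0 - s / deriv f1 z * (f2 (x0 - z - x) + f1 z)"
  by (auto simp: right_tangent_def fabc_left_branch algebra_simps)

lemma right_tangent_Infty [simp]:
  "(R x, Infty) \<in> right_tangent f1 f2 x0 y0 s z \<longleftrightarrow> x = x0 - z"
  "(Infty, R y) \<in> right_tangent f1 f2 x0 y0 s z \<longleftrightarrow> y = y0 - s / deriv f1 z * f1 z"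
  "(Infty, Infty) \<notin> right_tangent f1 f2 x0 y0 s z"
  by (auto simp: right_tangent_def)

lemma right_tangent_center: "0 < z \<Longrightarrow> (R x0, R y0) \<in> right_tangent f1 f2 x0 y0 s z"
  by (simp add: right_tangent_f1_branch normalized_increment_def)

lemma left_tangent_f2_branch:
  "x < x0 + w \<Longrightarrow>
    (R x, R y) \<in> left_tangent f1 f2 x0 y0 s w \<longleftrightarrow> y = y0 - s * normalized_increment f2 w (x0 - x)"
  by (auto simp: left_tangent_def fabc_left_branch normalized_increment_def algebra_simps
      diff_divide_distrib)

lemma left_tangent_f1_branch:
  "x0 + w < x \<Longrightarrow>
    (R x, R y) \<in> left_tangent f1 f2 x0 y0 s w \<longleftrightarrow> y = y0 + s / deriv f2 w * (f1 (x - x0 - w) + f2 w)"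
  by (auto simp: left_tangent_def fabc_right_branch algebra_simps)

lemma left_tangent_Infty [simp]:
  "(R x, Infty) \<in> left_tangent f1 f2 x0 y0 s w \<longleftrightarrow> x = x0 + w"
  "(Infty, R y) \<in> left_tangent f1 f2 x0 y0 s w \<longleftrightarrow> y = y0 + s / deriv f2 w * f2 w"
  "(Infty, Infty) \<notin> left_tangent f1 f2 x0 y0 s w"
  by (auto simp: left_tangent_def)

lemma left_tangent_center: "0 < w \<Longrightarrow> (R x0, R y0) \<in> left_tangent f1 f2 x0 y0 s w"
  by (simp add: left_tangent_f2_branch normalized_increment_def)

lemma right_tangent_finite_point_ne: "(R x, R y) \<in> right_tangent f1 f2 x0 y0 s z \<Longrightarrow> x \<noteq> x0 - z"
  by (simp add: right_tangent_def)

lemma left_tangent_finite_point_ne: "(R x, R y) \<in> left_tangent f1 f2 x0 y0 s w \<Longrightarrow> x \<noteq> x0 + w"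
  by (simp add: left_tangent_def)

lemma reflect_right_tangent:
  "reflect ` right_tangent f1 f2 x0 y0 s z = left_tangent f2 f1 (- x0) (- y0) s z"
  unfolding right_tangent_def left_tangent_def reflect_curve_f by simp

lemma reflect_left_tangent:
  "reflect ` left_tangent f1 f2 x0 y0 s w = right_tangent f2 f1 (- x0) (- y0) s w"
  unfolding right_tangent_def left_tangent_def reflect_curve_f by simp

lemma reflect_tangent_pencil:
  "(\<lambda>D. reflect ` D) ` tangent_pencil f1 f2 x0 y0 s = tangent_pencil f2 f1 (- x0) (- y0) s"
  unfolding tangent_pencil_def setcompr_eq_image image_insert image_Un image_image
  by (simp add: reflect_curve_l reflect_right_tangent reflect_left_tangent Un_commute)

lemma reflect_mem_tangent_pencil:
  "reflect ` D \<in> tangent_pencil f2 f1 (- x0) (- y0) s \<longleftrightarrow> D \<in> tangent_pencil f1 f2 x0 y0 s"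
  unfolding reflect_tangent_pencil[symmetric]
  by (metis (no_types, lifting) image_iff inj_image_eq_iff inj_reflect)

lemma tangent_pencil_cases [consumes 1, case_names line right left]:
  assumes "D \<in> tangent_pencil f1 f2 x0 y0 s"
  obtains "D = curve_l s (y0 - s * x0)"
    | z where "0 < z" "D = right_tangent f1 f2 x0 y0 s z"
    | w where "0 < w" "D = left_tangent f1 f2 x0 y0 s w"
  using assms unfolding tangent_pencil_def by blast

lemma tangent_pencil_memI:
  "curve_l s (y0 - s * x0) \<in> tangent_pencil f1 f2 x0 y0 s"
  "0 < z \<Longrightarrow> right_tangent f1 f2 x0 y0 s z \<in> tangent_pencil f1 f2 x0 y0 s"
  "0 < w \<Longrightarrow> left_tangent f1 f2 x0 y0 s w \<in> tangent_pencil f1 f2 x0 y0 s"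
  unfolding tangent_pencil_def by blast+

lemma tangent_pencil_covers_reflect:
  assumes "D' \<in> tangent_pencil f2 f1 (- x0) (- y0) s" "reflect q \<in> D'"
  shows "\<exists>D\<in>tangent_pencil f1 f2 x0 y0 s. q \<in> D"
proof
  show "reflect ` D' \<in> tangent_pencil f1 f2 x0 y0 s"
    using assms(1) reflect_mem_tangent_pencil[of "reflect ` D'"] by (simp add: image_image)
  show "q \<in> reflect ` D'"
    using assms(2) by (simp add: mem_reflect_image)
qed

lemma curve_l_mem_tangent_pencil:
  "(R x0, R y0) \<in> curve_l s t \<Longrightarrow> curve_l s t \<in> tangent_pencil f1 f2 x0 y0 s"
  using tangent_pencil_memI(1)[of s y0 x0 f1 f2] by simp

locale strongly_hyperbolic_pair =
  F1: strongly_hyperbolic_fun f1 + F2: strongly_hyperbolic_fun f2 for f1 f2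
begin

lemma swap: "strongly_hyperbolic_pair f2 f1"
  by (simp add: strongly_hyperbolic_pair_def F1.strongly_hyperbolic_fun_axioms
      F2.strongly_hyperbolic_fun_axioms)

lemma ex_sum_eq_neg_deriv:
  assumes "0 < e" "0 < k"
  shows "\<exists>w. 0 < w \<and> w < e \<and> f2 w + f1 (e - w) = k * - deriv f2 w"
proof -
  have "\<forall>\<^sub>F x in at_right 0.
      f2 x < k / 2 * - deriv f2 x \<and> f1 (e / 2) / (k / 2) < - deriv f2 x \<and> x < e / 2"
    using assms by (intro eventually_conj F2.eventually_less_neg_deriv_at_right_0
        F2.eventually_neg_deriv_gt_at_right_0 order_tendstoD(2)[OF tendsto_ident_at]) auto
  then obtain u where
    u: "0 < u" "u < e / 2" "f2 u < k / 2 * - deriv f2 u" "f1 (e / 2) < k / 2 * - deriv f2 u"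
    using assms by (auto dest!: eventually_at_right_imp_ex simp: field_simps)
  have "f1 (e - u) < f1 (e / 2)"
    using F1.strict_antimono[of "e / 2" "e - u"] u assms by simp
  then have le: "f2 u + f1 (e - u) \<le> k * - deriv f2 u"
    using u by simp
  obtain v where v: "0 < v" "v < e / 2" "k * - deriv f2 (e / 2) < f1 v"
    using eventually_at_right_imp_ex[OF eventually_conj[OF F1.eventually_gt_at_right_0
          order_tendstoD(2)[OF tendsto_ident_at, of 0 "e / 2"]]] assms by auto
  have "k * - deriv f2 (e - v) < k * - deriv f2 (e / 2)"
    using F2.deriv_strict_mono[of "e / 2" "e - v"] v assms by simp
  moreover have "0 < f2 (e - v)"
    using F2.pos v by simp
  ultimately have ge: "k * - deriv f2 (e - v) \<le> f2 (e - v) + f1 (e - (e - v))"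
    using v by simp
  have "continuous_on {0<..<e} (\<lambda>w. f2 w + f1 (e - w))"
    by (intro continuous_intros continuous_on_subset[OF F2.continuous_on]
        continuous_on_compose2[OF F1.continuous_on]) auto
  moreover have "{0<..<e} \<subseteq> {0<..}"
    by auto
  ultimately obtain w where "w \<in> {0<..<e}" "f2 w + f1 (e - w) = k * - deriv f2 w"
    using F2.IVT_neg_deriv[OF connected_Ioo, of 0 e "\<lambda>w. f2 w + f1 (e - w)" u "e - v" k] u v le ge
    by auto
  then show ?thesis
    by auto
qed

lemma fabc_gt_iff:
  assumes "0 < a" "x \<noteq> - b"
  shows "c < fabc f1 f2 a b c x \<longleftrightarrow> - b < x"
proof (cases "- b < x")
  case True
  then show ?thesis
    using F1.pos[of "x + b"] assms by (simp add: fabc_right_branch)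
next
  case False
  then show ?thesis
    using F2.pos[of "- x - b"] assms by (simp add: fabc_left_branch mult_less_0_iff)
qed

lemma inj_on_fabc:
  assumes "0 < a"
  shows "inj_on (fabc f1 f2 a b c) (- {- b})"
proof (rule linorder_inj_onI)
  fix x x' assume "x < x'" "x \<in> - {- b}" "x' \<in> - {- b}"
  then consider "- b < x" | "x' < - b" | "x < - b" "- b < x'"
    by fastforce
  then show "fabc f1 f2 a b c x \<noteq> fabc f1 f2 a b c x'"
  proof cases
    case 1
    then show ?thesis
      using F1.strict_antimono[of "x + b" "x' + b"] \<open>x < x'\<close> assms by (simp add: fabc_right_branch)
  next
    case 2
    then show ?thesis
      using F2.strict_antimono[of "- x' - b" "- x - b"] \<open>x < x'\<close> assms by (simp add: fabc_left_branch)
  next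
    case 3
    then show ?thesis
      using fabc_gt_iff[of a x b c] fabc_gt_iff[of a x' b c] assms by auto
  qed
qed auto

lemma fabc_surj:
  assumes "0 < a" "y \<noteq> c"
  shows "\<exists>x. x \<noteq> - b \<and> fabc f1 f2 a b c x = y"
proof (cases "c < y")
  case True
  then obtain t where "0 < t" "f1 t = (y - c) / a"
    using F1.surj_pos[of "(y - c) / a"] assms by auto
  then show ?thesis
    using assms by (intro exI[of _ "t - b"]) (simp add: fabc_right_branch)
next
  case False
  then obtain t where "0 < t" "f2 t = (c - y) / a"
    using F2.surj_pos[of "(c - y) / a"] assms by auto
  then show ?thesis
    using assms by (intro exI[of _ "- t - b"]) (simp add: fabc_left_branch)
qed

lemma curve_f_Int_curve_f_arg:
  assumes "0 < a" "b \<noteq> b'"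
  shows "curve_f f1 f2 a b c \<inter> curve_f f1 f2 a b' c = {(Infty, R c)}"
proof (rule point_sets_Int_eq_singletonI)
  fix x y
  assume "(R x, R y) \<in> curve_f f1 f2 a b c" "(R x, R y) \<in> curve_f f1 f2 a b' c"
  then have "fabc f1 f2 a b c x = fabc f1 f2 a b c (x + b' - b)" "x \<noteq> - b" "x + b' - b \<noteq> - b"
    using fabc_shift_arg[of f1 f2 a b' c x b] by auto
  then have "x = x + b' - b"
    using inj_onD[OF inj_on_fabc[OF assms(1), of b c], of x "x + b' - b"] by blast
  then show "(R x, R y) = (Infty, R c)"
    using assms by simp
qed (use assms in auto)

lemma ex_arg_shift_curve_f:
  assumes "0 < a" "q \<notin> curve_f f1 f2 a b c" "\<not> parallel q (Infty, R c)"
  shows "\<exists>b'. b' \<noteq> b \<and> q \<in> curve_f f1 f2 a b' c"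
  using assms(3)
proof (cases q rule: point_cases)
  case (R_R x y)
  then obtain x' where x': "x' \<noteq> - b" "fabc f1 f2 a b c x' = y"
    using fabc_surj[OF assms(1), where y = y and b = b] assms(3) by (auto simp: parallel_def)
  then have "q \<in> curve_f f1 f2 a (b + x' - x) c"
    using R_R fabc_shift_arg[of f1 f2 a "b + x' - x" c x b] by auto
  moreover have "x' \<noteq> x"
    using assms(2) R_R x' by auto
  ultimately show ?thesis
    by (intro exI[of _ "b + x' - x"]) auto
next
  case (R_Infty x)
  then show ?thesis
    using assms(2) by (intro exI[of _ "- x"]) auto
qed (auto simp: parallel_def)

lemma exists_touching_circle_arg_shift:
  assumes "0 < a" "q \<notin> curve_f f1 f2 a b c" "\<not> parallel q (Infty, R c)"
  shows "\<exists>D\<in>Cminus f1 f2. (Infty, R c) \<in> D \<and> q \<in> D \<and> curve_f f1 f2 a b c \<inter> D = {(Infty, R c)}"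
proof -
  obtain b' where "b' \<noteq> b" "q \<in> curve_f f1 f2 a b' c"
    using ex_arg_shift_curve_f[OF assms] by blast
  then show ?thesis
    using curve_f_Int_curve_f_arg[OF assms(1), of b b' c] curve_f_in_Cminus[OF assms(1)]
    by (intro bexI[of _ "curve_f f1 f2 a b' c"]) auto
qed

lemma tangent_pencil_subset_Cminus:
  "s < 0 \<Longrightarrow> tangent_pencil f1 f2 x0 y0 s \<subseteq> Cminus f1 f2"
  unfolding tangent_pencil_def right_tangent_def left_tangent_def
  using F1.neg_div_deriv_pos F2.neg_div_deriv_pos
  by (auto intro!: curve_f_in_Cminus curve_l_in_Cminus)

lemma right_tangent_f1_branch_above_tangent:
  assumes "s < 0" "0 < z" "x0 - z < x" "x \<noteq> x0" "(R x, R y) \<in> right_tangent f1 f2 x0 y0 s z"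
  shows "y0 + s * (x - x0) < y"
  using F1.normalized_increment_less[of z "x - x0"] assms by (simp add: right_tangent_f1_branch)

lemma right_tangent_f1_branch_sign:
  assumes "s < 0" "0 < z" "x0 - z < x" "(R x, R y) \<in> right_tangent f1 f2 x0 y0 s z"
  shows "x0 < x \<Longrightarrow> y < y0" and "x < x0 \<Longrightarrow> y0 < y"
  using F1.normalized_increment_pos[of z "x - x0"] F1.normalized_increment_neg[of z "x - x0"] assms
  by (auto simp: right_tangent_f1_branch mult_neg_pos mult_neg_neg)

lemma right_tangent_f2_branch_below:
  assumes "s < 0" "0 < z" "x < x0 - z" "(R x, R y) \<in> right_tangent f1 f2 x0 y0 s z"
  shows "y < y0"
  using mult_pos_pos[OF F1.neg_div_deriv_pos[of s z] add_pos_pos[OF F2.pos[of "x0 - z - x"] F1.pos[of z]]]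
    assms
  by (simp add: right_tangent_f2_branch)

lemma left_tangent_f2_branch_below_tangent:
  assumes "s < 0" "0 < w" "x < x0 + w" "x \<noteq> x0" "(R x, R y) \<in> left_tangent f1 f2 x0 y0 s w"
  shows "y < y0 + s * (x - x0)"
proof -
  have "normalized_increment f2 w (x0 - x) < x0 - x"
    using F2.normalized_increment_less[of w "x0 - x"] assms by simp
  then have "- s * normalized_increment f2 w (x0 - x) < - s * (x0 - x)"
    using assms(1) by simp
  then show ?thesis
    using assms by (simp add: left_tangent_f2_branch algebra_simps)
qed

lemma left_tangent_f2_branch_sign:
  assumes "s < 0" "0 < w" "x < x0" "(R x, R y) \<in> left_tangent f1 f2 x0 y0 s w"
  shows "y0 < y"
  using F2.normalized_increment_pos[of w "x0 - x"] assms
  by (simp add: left_tangent_f2_branch mult_neg_pos)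

lemma left_tangent_f1_branch_above:
  assumes "s < 0" "0 < w" "x0 + w < x" "(R x, R y) \<in> left_tangent f1 f2 x0 y0 s w"
  shows "y0 < y"
  using mult_pos_pos[OF F2.neg_div_deriv_pos[of s w] add_pos_pos[OF F1.pos[of "x - x0 - w"] F2.pos[of w]]]
    assms
  by (simp add: left_tangent_f1_branch)

lemma curve_l_Int_right_tangent:
  assumes "s < 0" "0 < z"
  shows "curve_l s (y0 - s * x0) \<inter> right_tangent f1 f2 x0 y0 s z = {(R x0, R y0)}"
proof (rule point_sets_Int_eq_singletonI)
  fix x y
  assume L: "(R x, R y) \<in> curve_l s (y0 - s * x0)" and T: "(R x, R y) \<in> right_tangent f1 f2 x0 y0 s z"
  have y: "y = y0 + s * (x - x0)"
    using L by (simp add: algebra_simps)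
  consider "x < x0 - z" | "x0 - z < x" "x \<noteq> x0" | "x = x0"
    using right_tangent_finite_point_ne[OF T] by linarith
  then show "(R x, R y) = (R x0, R y0)"
  proof cases
    case 1
    then have "0 < s * (x - x0)"
      using assms by (intro mult_neg_neg) auto
    then show ?thesis
      using right_tangent_f2_branch_below[OF assms 1 T] y by simp
  next
    case 2
    then show ?thesis
      using right_tangent_f1_branch_above_tangent[OF assms 2 T] y by simp
  qed (use y in simp)
qed (use assms in \<open>auto simp: right_tangent_center\<close>)

lemma right_tangent_Int_left_tangent:
  assumes "s < 0" "0 < z" "0 < w"
  shows "right_tangent f1 f2 x0 y0 s z \<inter> left_tangent f1 f2 x0 y0 s w = {(R x0, R y0)}"
proof (rule point_sets_Int_eq_singletonI)
  fix x y
  assume T: "(R x, R y) \<in> right_tangent f1 f2 x0 y0 s z"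
    and T': "(R x, R y) \<in> left_tangent f1 f2 x0 y0 s w"
  consider "x < x0 - z" | "x0 - z < x" "x < x0 + w" "x \<noteq> x0" | "x0 + w < x" | "x = x0"
    using right_tangent_finite_point_ne[OF T] left_tangent_finite_point_ne[OF T'] by linarith
  then show "(R x, R y) = (R x0, R y0)"
  proof cases
    case 1
    then show ?thesis
      using right_tangent_f2_branch_below[OF assms(1,2) 1 T]
        left_tangent_f2_branch_sign[OF assms(1,3) _ T'] assms by simp
  next
    case 2
    then show ?thesis
      using right_tangent_f1_branch_above_tangent[OF assms(1,2) 2(1,3) T]
        left_tangent_f2_branch_below_tangent[OF assms(1,3) 2(2,3) T'] by simp
  next
    case 3
    then show ?thesis
      using right_tangent_f1_branch_sign(1)[OF assms(1,2) _ T] left_tangent_f1_branch_above[OF assms(1,3) 3 T']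
        assms by simp
  next
    case 4
    then show ?thesis
      using T assms by (simp add: right_tangent_f1_branch normalized_increment_def)
  qed
next
  fix y
  assume "(Infty, R y) \<in> right_tangent f1 f2 x0 y0 s z" "(Infty, R y) \<in> left_tangent f1 f2 x0 y0 s w"
  then show "(Infty, R y) = (R x0, R y0)"
    using mult_pos_pos[OF F1.neg_div_deriv_pos[of s z] F1.pos[of z]]
      mult_pos_pos[OF F2.neg_div_deriv_pos[of s w] F2.pos[of w]] assms
    by simp
qed (use assms in \<open>auto simp: right_tangent_center left_tangent_center\<close>)

lemma right_tangent_f2_branch_strict_antimono:
  assumes "s < 0" "0 < z" "z < z'" "x < x0 - z'"
    and "(R x, R y) \<in> right_tangent f1 f2 x0 y0 s z" "(R x, R y') \<in> right_tangent f1 f2 x0 y0 s z'"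
  shows "y' < y"
proof -
  have "f2 (x0 - z - x) < f2 (x0 - z' - x)"
    using F2.strict_antimono[of "x0 - z' - x" "x0 - z - x"] assms by simp
  then have "s / deriv f1 z * f2 (x0 - z - x) < s / deriv f1 z' * f2 (x0 - z' - x)"
    using F1.neg_div_deriv_strict_mono[OF assms(1-3)] F1.neg_div_deriv_pos[OF assms(1,2)]
      F2.pos[of "x0 - z - x"] assms
    by (intro mult_strict_mono) auto
  then show ?thesis
    using F1.neg_div_deriv_mult_strict_mono[OF assms(1-3)] assms
    by (simp add: right_tangent_f2_branch algebra_simps)
qed

lemma right_tangent_Int_right_tangent:
  assumes "s < 0" "0 < z" "z < z'"
  shows "right_tangent f1 f2 x0 y0 s z \<inter> right_tangent f1 f2 x0 y0 s z' = {(R x0, R y0)}"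
proof -
  have "0 < z'"
    using assms by simp
  have asymptote: "s / deriv f1 z * f1 z < s / deriv f1 z' * f1 z'"
    by (rule F1.neg_div_deriv_mult_strict_mono[OF assms])
  show ?thesis
  proof (rule point_sets_Int_eq_singletonI)
    fix x y
    assume T: "(R x, R y) \<in> right_tangent f1 f2 x0 y0 s z"
      and T': "(R x, R y) \<in> right_tangent f1 f2 x0 y0 s z'"
    consider "x0 - z < x" | "x0 - z' < x" "x < x0 - z" | "x < x0 - z'"
      using right_tangent_finite_point_ne[OF T] right_tangent_finite_point_ne[OF T'] by linarith
    then show "(R x, R y) = (R x0, R y0)"
    proof cases
      case 1
      then have "normalized_increment f1 z (x - x0) = normalized_increment f1 z' (x - x0)"
        using T T' assms by (simp add: right_tangent_f1_branch)
      then have "x = x0"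
        using F1.normalized_increment_strict_mono_base[OF assms(2,3), of "x - x0"] 1 by fastforce
      then show ?thesis
        using T 1 by (simp add: right_tangent_f1_branch normalized_increment_def)
    next
      case 2
      then show ?thesis
        using right_tangent_f2_branch_below[OF assms(1,2) 2(2) T]
          right_tangent_f1_branch_sign(2)[OF assms(1) \<open>0 < z'\<close> 2(1) T'] assms by simp
    next
      case 3
      then show ?thesis
        using right_tangent_f2_branch_strict_antimono[OF assms 3 T T'] by simp
    qed
  next
    fix y
    assume "(Infty, R y) \<in> right_tangent f1 f2 x0 y0 s z" "(Infty, R y) \<in> right_tangent f1 f2 x0 y0 s z'"
    then show "(Infty, R y) = (R x0, R y0)"
      using asymptote by simp
  qed (use assms in \<open>auto simp: right_tangent_center\<close>)
qed

lemma right_tangent_Int_tangent_pencil: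
  assumes "s < 0" "0 < z" "D \<in> tangent_pencil f1 f2 x0 y0 s" "D \<noteq> right_tangent f1 f2 x0 y0 s z"
  shows "right_tangent f1 f2 x0 y0 s z \<inter> D = {(R x0, R y0)}"
  using assms(3)
proof (cases rule: tangent_pencil_cases)
  case line
  then show ?thesis
    using curve_l_Int_right_tangent[OF assms(1,2)] by (simp add: Int_commute)
next
  case (right z')
  then consider "z < z'" | "z' < z"
    using assms(4) by fastforce
  then show ?thesis
  proof cases
    case 1
    then show ?thesis
      using right_tangent_Int_right_tangent[OF assms(1,2)] right by simp
  next
    case 2
    then show ?thesis
      using right_tangent_Int_right_tangent[OF assms(1) right(1)] right by (simp add: Int_commute)
  qed
next
  case (left w)
  then show ?thesis
    using right_tangent_Int_left_tangent[OF assms(1,2)] by simp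
qed

lemma left_tangent_Int_tangent_pencil:
  assumes "s < 0" "0 < w" "D \<in> tangent_pencil f1 f2 x0 y0 s" "D \<noteq> left_tangent f1 f2 x0 y0 s w"
  shows "left_tangent f1 f2 x0 y0 s w \<inter> D = {(R x0, R y0)}"
proof -
  interpret swapped: strongly_hyperbolic_pair f2 f1
    by (rule swap)
  have "reflect ` D \<in> tangent_pencil f2 f1 (- x0) (- y0) s"
    using assms(3) reflect_mem_tangent_pencil by blast
  moreover have "reflect ` D \<noteq> right_tangent f2 f1 (- x0) (- y0) s w"
    using assms(4) inj_image_eq_iff[OF inj_reflect] by (metis reflect_left_tangent)
  ultimately have "right_tangent f2 f1 (- x0) (- y0) s w \<inter> reflect ` D = {(R (- x0), R (- y0))}"
    by (rule swapped.right_tangent_Int_tangent_pencil[OF assms(1,2)])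
  then show ?thesis
    using reflect_image_Int_eq_singleton_iff[of "left_tangent f1 f2 x0 y0 s w" D "(R x0, R y0)"]
    by (simp add: reflect_left_tangent)
qed

lemma tangent_pencil_Int:
  assumes "s < 0" "C \<in> tangent_pencil f1 f2 x0 y0 s" "D \<in> tangent_pencil f1 f2 x0 y0 s" "C \<noteq> D"
  shows "C \<inter> D = {(R x0, R y0)}"
  using assms(2)
proof (cases rule: tangent_pencil_cases)
  case line
  from assms(3) show ?thesis
  proof (cases rule: tangent_pencil_cases)
    case line
    then show ?thesis
      using assms(4) \<open>C = curve_l s (y0 - s * x0)\<close> by simp
  next
    case (right z)
    then show ?thesis
      using right_tangent_Int_tangent_pencil[OF assms(1) right(1) assms(2)] assms(4) by (simp add: Int_commute)
  next
    case (left w)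
    then show ?thesis
      using left_tangent_Int_tangent_pencil[OF assms(1) left(1) assms(2)] assms(4) by (simp add: Int_commute)
  qed
next
  case (right z)
  then show ?thesis
    using right_tangent_Int_tangent_pencil[OF assms(1) right(1) assms(3)] assms(4) by simp
next
  case (left w)
  then show ?thesis
    using left_tangent_Int_tangent_pencil[OF assms(1) left(1) assms(3)] assms(4) by simp
qed

lemma right_tangent_through_Infty:
  assumes "s < 0" "y1 < y0"
  shows "\<exists>z>0. (Infty, R y1) \<in> right_tangent f1 f2 x0 y0 s z"
proof -
  define k where "k = (y1 - y0) / s"
  have "0 < k"
    using assms by (simp add: k_def divide_neg_neg)
  then obtain z where z: "0 < z" "f1 z = k * - deriv f1 z"
    using F1.ex_eq_neg_deriv by blast
  then have "s / deriv f1 z * f1 z = y0 - y1"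
    using F1.deriv_neg[of z] assms by (simp add: k_def)
  then show ?thesis
    using z by (intro exI[of _ z]) simp
qed

lemma tangent_pencil_covers_right_above:
  assumes "s < 0" "x0 < x1" "y0 < y1"
  shows "\<exists>D\<in>tangent_pencil f1 f2 x0 y0 s. (R x1, R y1) \<in> D"
proof -
  obtain w where w: "0 < w" "w < x1 - x0" "f2 w + f1 (x1 - x0 - w) = (y1 - y0) / s * deriv f2 w"
    using ex_sum_eq_neg_deriv[of "x1 - x0" "(y1 - y0) / - s"] assms by (auto simp: divide_pos_neg)
  then have "(R x1, R y1) \<in> left_tangent f1 f2 x0 y0 s w"
    using F2.deriv_neg[of w] assms(1) by (simp add: left_tangent_f1_branch add.commute)
  then show ?thesis
    using tangent_pencil_memI(3) w(1) by blast
qed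

lemma tangent_pencil_covers_right_below:
  assumes "s < 0" "x0 < x1" "y1 < y0"
  shows "\<exists>D\<in>tangent_pencil f1 f2 x0 y0 s. (R x1, R y1) \<in> D"
proof -
  define d where "d = x1 - x0"
  define m where "m = (y1 - y0) / s"
  have "0 < d" "0 < m" and y1: "y1 = y0 + s * m"
    using assms by (auto simp: d_def m_def divide_neg_neg)
  consider "m = d" | "m < d" | "d < m"
    by linarith
  then show ?thesis
  proof cases
    case 1
    then have "(R x1, R y1) \<in> curve_l s (y0 - s * x0)"
      by (simp add: y1 d_def right_diff_distrib)
    then show ?thesis
      using tangent_pencil_memI(1) by blast
  next
    case 2
    then obtain z where z: "0 < z" "f1 z - f1 (z + d) = m * - deriv f1 z"
      using F1.ex_drop_eq_neg_deriv_left \<open>0 < m\<close> by blast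
    then have "normalized_increment f1 z (x1 - x0) = m"
      using F1.deriv_neg[of z] by (simp add: normalized_increment_def d_def field_simps)
    then have "(R x1, R y1) \<in> right_tangent f1 f2 x0 y0 s z"
      using z assms by (simp add: right_tangent_f1_branch y1)
    then show ?thesis
      using tangent_pencil_memI(2) z(1) by blast
  next
    case 3
    then obtain w where w: "d < w" "f2 (w - d) - f2 w = m * - deriv f2 w"
      using F2.ex_drop_eq_neg_deriv_right \<open>0 < d\<close> by blast
    then have "0 < w" "normalized_increment f2 w (x0 - x1) = - m"
      using F2.deriv_neg[of w] \<open>0 < d\<close> by (auto simp: normalized_increment_def d_def field_simps)
    then have "(R x1, R y1) \<in> left_tangent f1 f2 x0 y0 s w"
      using w by (simp add: left_tangent_f2_branch y1 d_def)
    then show ?thesis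
      using tangent_pencil_memI(3) \<open>0 < w\<close> by blast
  qed
qed

lemma tangent_pencil_covers_right:
  assumes "s < 0" "x0 < x1" "y1 \<noteq> y0"
  shows "\<exists>D\<in>tangent_pencil f1 f2 x0 y0 s. (R x1, R y1) \<in> D"
proof (cases "y0 < y1")
  case True
  then show ?thesis
    by (rule tangent_pencil_covers_right_above[OF assms(1,2)])
next
  case False
  then show ?thesis
    using assms(3) by (intro tangent_pencil_covers_right_below[OF assms(1,2)]) simp
qed

lemma tangent_pencil_covers_finite:
  assumes "s < 0" "x1 \<noteq> x0" "y1 \<noteq> y0"
  shows "\<exists>D\<in>tangent_pencil f1 f2 x0 y0 s. (R x1, R y1) \<in> D"
proof (cases "x0 < x1")
  case True
  show ?thesis
    by (rule tangent_pencil_covers_right[OF assms(1) True assms(3)])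
next
  case False
  interpret swapped: strongly_hyperbolic_pair f2 f1
    by (rule swap)
  have "- x0 < - x1" "- y1 \<noteq> - y0"
    using False assms by auto
  then obtain D' where "D' \<in> tangent_pencil f2 f1 (- x0) (- y0) s" "(R (- x1), R (- y1)) \<in> D'"
    using swapped.tangent_pencil_covers_right[OF assms(1)] by blast
  then show ?thesis
    using tangent_pencil_covers_reflect[of D' f2 f1 x0 y0 s "(R x1, R y1)"] by simp
qed

lemma tangent_pencil_covers_Infty:
  assumes "s < 0" "y1 \<noteq> y0"
  shows "\<exists>D\<in>tangent_pencil f1 f2 x0 y0 s. (Infty, R y1) \<in> D"
proof (cases "y1 < y0")
  case True
  then obtain z where "0 < z" "(Infty, R y1) \<in> right_tangent f1 f2 x0 y0 s z"
    using right_tangent_through_Infty[OF assms(1)] by blast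
  then show ?thesis
    using tangent_pencil_memI(2)[of z] by blast
next
  case False
  interpret swapped: strongly_hyperbolic_pair f2 f1
    by (rule swap)
  have "- y1 < - y0"
    using False assms(2) by simp
  then obtain z where "0 < z" "reflect (Infty, R y1) \<in> right_tangent f2 f1 (- x0) (- y0) s z"
    using swapped.right_tangent_through_Infty[OF assms(1), of "- y1" "- y0" "- x0"] by auto
  then show ?thesis
    by (intro tangent_pencil_covers_reflect[OF tangent_pencil_memI(2)])
qed

lemma tangent_pencil_covers_R_Infty:
  assumes "x1 \<noteq> x0"
  shows "\<exists>D\<in>tangent_pencil f1 f2 x0 y0 s. (R x1, Infty) \<in> D"
proof (cases "x1 < x0")
  case True
  then show ?thesis
    by (intro bexI[of _ "right_tangent f1 f2 x0 y0 s (x0 - x1)"] tangent_pencil_memI(2)) auto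
next
  case False
  then show ?thesis
    using assms by (intro bexI[of _ "left_tangent f1 f2 x0 y0 s (x1 - x0)"] tangent_pencil_memI(3)) auto
qed

lemma tangent_pencil_covers:
  assumes "s < 0" "\<not> parallel q (R x0, R y0)"
  shows "\<exists>D\<in>tangent_pencil f1 f2 x0 y0 s. q \<in> D"
  using assms(2)
proof (cases q rule: point_cases)
  case (R_R x1 y1)
  then show ?thesis
    using tangent_pencil_covers_finite[OF assms(1)] assms(2) by (simp add: parallel_def)
next
  case (R_Infty x1)
  then show ?thesis
    using tangent_pencil_covers_R_Infty assms(2) by (simp add: parallel_def)
next
  case (Infty_R y1)
  then show ?thesis
    using tangent_pencil_covers_Infty[OF assms(1)] assms(2) by (simp add: parallel_def)
next
  case Infty_Infty
  then have "q \<in> curve_l s (y0 - s * x0)"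
    by simp
  then show ?thesis
    using tangent_pencil_memI(1) by blast
qed

lemma exists_touching_circle_tangent_pencil:
  assumes "s < 0" "C \<in> tangent_pencil f1 f2 x0 y0 s" "q \<notin> C" "\<not> parallel q (R x0, R y0)"
  shows "\<exists>D\<in>Cminus f1 f2. (R x0, R y0) \<in> D \<and> q \<in> D \<and> C \<inter> D = {(R x0, R y0)}"
proof -
  obtain D where D: "D \<in> tangent_pencil f1 f2 x0 y0 s" "q \<in> D"
    using tangent_pencil_covers[OF assms(1,4)] by blast
  moreover have "C \<noteq> D"
    using assms(3) D(2) by blast
  ultimately have "C \<inter> D = {(R x0, R y0)}"
    by (intro tangent_pencil_Int[OF assms(1,2)])
  moreover have "D \<in> Cminus f1 f2"
    using D(1) tangent_pencil_subset_Cminus[OF assms(1)] by blast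
  ultimately show ?thesis
    using D(2) by blast
qed

lemma curve_f_mem_tangent_pencil:
  assumes "0 < a" "(R x0, R y0) \<in> curve_f f1 f2 a b c"
  shows "\<exists>s<0. curve_f f1 f2 a b c \<in> tangent_pencil f1 f2 x0 y0 s"
proof (cases "- b < x0")
  case True
  define z where "z = x0 + b"
  have "0 < z" "a * deriv f1 z < 0"
    using True F1.deriv_neg[of z] assms(1) by (auto simp: z_def mult_pos_neg)
  moreover have "curve_f f1 f2 a b c = right_tangent f1 f2 x0 y0 (a * deriv f1 z) z"
    using True assms \<open>a * deriv f1 z < 0\<close> by (auto simp: right_tangent_def z_def fabc_right_branch)
  ultimately show ?thesis
    using tangent_pencil_memI(2)[of z f1 f2 x0 y0 "a * deriv f1 z"] by auto
next
  case False
  define w where "w = - x0 - b"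
  have "0 < w" "a * deriv f2 w < 0"
    using False assms F2.deriv_neg[of w] by (auto simp: w_def mult_pos_neg)
  moreover have "curve_f f1 f2 a b c = left_tangent f1 f2 x0 y0 (a * deriv f2 w) w"
    using False assms \<open>a * deriv f2 w < 0\<close> by (auto simp: left_tangent_def w_def fabc_left_branch)
  ultimately show ?thesis
    using tangent_pencil_memI(3)[of w f1 f2 x0 y0 "a * deriv f2 w"] by auto
qed

lemma exists_touching_circle_curve_f:
  assumes "0 < a" "p \<in> curve_f f1 f2 a b c" "q \<notin> curve_f f1 f2 a b c" "\<not> parallel q p"
  shows "\<exists>D\<in>Cminus f1 f2. p \<in> D \<and> q \<in> D \<and> curve_f f1 f2 a b c \<inter> D = {p}"
  using assms(2)
proof (cases p rule: point_cases)
  case (R_R x0 y0)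
  then obtain s where "s < 0" "curve_f f1 f2 a b c \<in> tangent_pencil f1 f2 x0 y0 s"
    using curve_f_mem_tangent_pencil[OF assms(1)] assms(2) by blast
  then show ?thesis
    using exists_touching_circle_tangent_pencil assms(3,4) R_R by simp
next
  case (R_Infty x0)
  then have "p = (R (- b), Infty)"
    using assms(2) by simp
  then show ?thesis
    using exists_touching_circle_const_shift[OF assms(1,3)] assms(4) by simp
next
  case (Infty_R y0)
  then have "p = (Infty, R c)"
    using assms(2) by simp
  then show ?thesis
    using exists_touching_circle_arg_shift[OF assms(1,3)] assms(4) by simp
qed simp

lemma exists_touching_circle_curve_l:
  assumes "s < 0" "p \<in> curve_l s t" "q \<notin> curve_l s t" "\<not> parallel q p"
  shows "\<exists>D\<in>Cminus f1 f2. p \<in> D \<and> q \<in> D \<and> curve_l s t \<inter> D = {p}"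
  using assms(2)
proof (cases p rule: point_cases)
  case (R_R x0 y0)
  then have "curve_l s t \<in> tangent_pencil f1 f2 x0 y0 s"
    using curve_l_mem_tangent_pencil assms(2) by simp
  then show ?thesis
    using exists_touching_circle_tangent_pencil[OF assms(1)] assms(3,4) R_R by simp
next
  case Infty_Infty
  then show ?thesis
    using exists_touching_circle_parallel_line[OF assms(1,3)] assms(4) by simp
qed simp_all

end

theorem theorem4p13:
  fixes f1 f2 :: "real \<Rightarrow> real" and C :: "point set" and p q :: point
  assumes "strongly_hyperbolic f1" and "strongly_hyperbolic f2"
    and "C \<in> Cminus f1 f2" and "p \<in> C" and "q \<notin> C" and "\<not> parallel q p"
  shows "\<exists>D \<in> Cminus f1 f2. p \<in> D \<and> q \<in> D \<and> C \<inter> D = {p}"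
proof -
  interpret strongly_hyperbolic_pair f1 f2
    using assms(1,2) by (simp add: strongly_hyperbolic_pair_def strongly_hyperbolic_fun_def)
  from assms(3) consider a b c where "0 < a" "C = curve_f f1 f2 a b c" | s t where "s < 0" "C = curve_l s t"
    unfolding Cminus_def by blast
  then show ?thesis
  proof cases
    case 1
    then show ?thesis
      using exists_touching_circle_curve_f[OF 1(1)] assms(4-6) by simp
  next
    case 2
    then show ?thesis
      using exists_touching_circle_curve_l[OF 2(1)] assms(4-6) by simp
  qed
qed

end
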